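(* Let $H$ be a Hopf algebra and $A$ an $H$-Galois object, and let $\mathcal{C}(A,H)$ be its Ehresmann–Schauenburg Hopf algebra. For every character $\phi$ of $\mathcal{C}(A,H)$ (equivalently, every bisection), $Ad_\phi=\mathrm{coinn}(\phi)$, i.e. for all $c\in\mathcal{C}(A,H)$, $$F_\phi(a)\otimes F_\phi(\tilde a)\big|_{c=a\otimes\tilde a}=\phi(c_{(1)})\,c_{(2)}\,\phi(S_{\mathcal C}(c_{(3)})),$$ where $Ad_\phi(a\otimes\tilde a):=F_\phi(a)\otimes F_\phi(\tilde a)$ and $F_\phi(a)=\phi(a_{(0)}\otimes a_{(1)}^{\langle1\rangle})\,a_{(1)}^{\langle2\rangle}$.
   Context: Algebras over $\mathbb{C}$; Sweedler notation with implicit summation. An $H$-Galois object is a right $H$-comodule algebra $A$ (coaction $\delta^A(a)=a_{(0)}\otimes a_{(1)}$) with coinvariants $A^{coH}=\mathbb{C}$ such that $\chi:A\otimes A\to A\otimes H$, $a'\otimes a\mapsto a'a_{(0)}\otimes a_{(1)}$, is bijective; $\tau(h)=\chi^{-1}(1\otimes h)=:h^{\langle1\rangle}\otimes h^{\langle2\rangle}$. $\mathcal{C}(A,H)=(A\otimes A)^{coH}=\{\sum a\otimes\tilde a:\sum a_{(0)}\otimes\tilde a_{(0)}\otimes a_{(1)}\tilde a_{(1)}=\sum a\otimes\tilde a\otimes1\}$ is a Hopf algebra with product $(a\otimes\tilde a)(a'\otimes\tilde a')=aa'\otimes\tilde a'\tilde a$, unit $1\otimes1$, coproduct $\Delta_{\mathcal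 C}(a\otimes\tilde a)=a_{(0)}\otimes a_{(1)}^{\langle1\rangle}\otimes a_{(1)}^{\langle2\rangle}\otimes\tilde a=:c_{(1)}\otimes c_{(2)}$ for $c=a\otimes\tilde a$, counit $\epsilon_{\mathcal C}(a\otimes\tilde a)=a\tilde a$, antipode $S_{\mathcal C}(a\otimes\tilde a)=\tilde a_{(0)}\otimes\tilde a_{(1)}^{\langle1\rangle}a\,\tilde a_{(1)}^{\langle2\rangle}$. A character is a unital algebra map $\phi:\mathcal{C}(A,H)\to\mathbb{C}$. For a character $\phi$ of a Hopf algebra $K$, $\mathrm{coinn}(\phi):K\to K$, $h\mapsto\phi(h_{(1)})h_{(2)}\phi(S(h_{(3)}))$. *)

theory Defs
  imports Complex_Main
begin

class complex_algebra_1 = ring_1 +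
  fixes scaleC :: "complex \<Rightarrow> 'a \<Rightarrow> 'a"  (infixr \<open>*\<^sub>C\<close> 75)
  assumes scaleC_add_right: "c *\<^sub>C (x + y) = c *\<^sub>C x + c *\<^sub>C y"
    and scaleC_add_left: "(c + d) *\<^sub>C x = c *\<^sub>C x + d *\<^sub>C x"
    and scaleC_scaleC: "c *\<^sub>C (d *\<^sub>C x) = (c * d) *\<^sub>C x"
    and scaleC_one: "(1::complex) *\<^sub>C x = x"
    and scaleC_mult_left: "(c *\<^sub>C x) * y = c *\<^sub>C (x * y)"
    and scaleC_mult_right: "x * (c *\<^sub>C y) = c *\<^sub>C (x * y)"

text \<open>An element of a tensor product V1 (x) ... (x) Vn of complex vector spaces is
represented by a finite list of elementary tensors (tuples); two such lists represent the
same tensor iff every multilinear form V1 x ... x Vn -> C takes the same (summed) value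
on them (over a field, tensors are separated by multilinear forms).\<close>

definition clinear :: "('a::complex_algebra_1 \<Rightarrow> complex) \<Rightarrow> bool" where
  "clinear f \<longleftrightarrow> (\<forall>x y. f (x + y) = f x + f y) \<and> (\<forall>c x. f (c *\<^sub>C x) = c * f x)"

definition bilin :: "('a::complex_algebra_1 \<Rightarrow> 'b::complex_algebra_1 \<Rightarrow> complex) \<Rightarrow> bool" where
  "bilin f \<longleftrightarrow> (\<forall>y. clinear (\<lambda>x. f x y)) \<and> (\<forall>x. clinear (\<lambda>y. f x y))"

definition trilin ::
  "('a::complex_algebra_1 \<Rightarrow> 'b::complex_algebra_1 \<Rightarrow> 'c::complex_algebra_1 \<Rightarrow> complex) \<Rightarrow> bool" where
  "trilin f \<longleftrightarrow> (\<forall>y z. clinear (\<lambda>x. f x y z)) \<and> (\<forall>x z. clinear (\<lambda>y. f x y z))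
      \<and> (\<forall>x y. clinear (\<lambda>z. f x y z))"

definition teq2 :: "('a::complex_algebra_1 \<times> 'b::complex_algebra_1) list \<Rightarrow> ('a \<times> 'b) list \<Rightarrow> bool" where
  "teq2 xs ys \<longleftrightarrow> (\<forall>f. bilin f \<longrightarrow>
      (\<Sum>(x, y)\<leftarrow>xs. f x y) = (\<Sum>(x, y)\<leftarrow>ys. f x y))"

definition teq3 :: "('a::complex_algebra_1 \<times> 'b::complex_algebra_1 \<times> 'c::complex_algebra_1) list
    \<Rightarrow> ('a \<times> 'b \<times> 'c) list \<Rightarrow> bool" where
  "teq3 xs ys \<longleftrightarrow> (\<forall>f. trilin f \<longrightarrow>
      (\<Sum>(x, y, z)\<leftarrow>xs. f x y z) = (\<Sum>(x, y, z)\<leftarrow>ys. f x y z))"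

definition tmult :: "('a::complex_algebra_1 \<times> 'b::complex_algebra_1) list \<Rightarrow> ('a \<times> 'b) list \<Rightarrow> ('a \<times> 'b) list" where
  "tmult xs ys = concat (map (\<lambda>(a, b). map (\<lambda>(a', b'). (a * a', b * b')) ys) xs)"

text \<open>A Hopf algebra (H, Delta, eps, S) over C; the coproduct Delta h = h_(1) (x) h_(2) is given
by a representing list of elementary tensors.\<close>

definition hopf_algebra ::
  "('h::complex_algebra_1 \<Rightarrow> ('h \<times> 'h) list) \<Rightarrow> ('h \<Rightarrow> complex) \<Rightarrow> ('h \<Rightarrow> 'h) \<Rightarrow> bool" where
  "hopf_algebra \<Delta> \<epsilon> S \<longleftrightarrow>
     \<comment> \<open>linearity of the structure maps\<close>
     (\<forall>x y. teq2 (\<Delta> (x + y)) (\<Delta> x @ \<Delta> y)) \<and>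
     (\<forall>c x. teq2 (\<Delta> (c *\<^sub>C x)) (map (\<lambda>(a, b). (c *\<^sub>C a, b)) (\<Delta> x))) \<and>
     clinear \<epsilon> \<and>
     (\<forall>x y. S (x + y) = S x + S y) \<and> (\<forall>c x. S (c *\<^sub>C x) = c *\<^sub>C S x) \<and>
     \<comment> \<open>Delta and eps are unital algebra maps\<close>
     (\<forall>x y. teq2 (\<Delta> (x * y)) (tmult (\<Delta> x) (\<Delta> y))) \<and> teq2 (\<Delta> 1) [(1, 1)] \<and>
     (\<forall>x y. \<epsilon> (x * y) = \<epsilon> x * \<epsilon> y) \<and> \<epsilon> 1 = 1 \<and>
     \<comment> \<open>coassociativity\<close>
     (\<forall>x. teq3 (concat (map (\<lambda>(a, b). map (\<lambda>(a1, a2). (a1, a2, b)) (\<Delta> a)) (\<Delta> x)))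
                (concat (map (\<lambda>(a, b). map (\<lambda>(b1, b2). (a, b1, b2)) (\<Delta> b)) (\<Delta> x)))) \<and>
     \<comment> \<open>counit\<close>
     (\<forall>x. (\<Sum>(a, b)\<leftarrow>\<Delta> x. \<epsilon> a *\<^sub>C b) = x) \<and>
     (\<forall>x. (\<Sum>(a, b)\<leftarrow>\<Delta> x. \<epsilon> b *\<^sub>C a) = x) \<and>
     \<comment> \<open>antipode\<close>
     (\<forall>x. (\<Sum>(a, b)\<leftarrow>\<Delta> x. S a * b) = \<epsilon> x *\<^sub>C 1) \<and>
     (\<forall>x. (\<Sum>(a, b)\<leftarrow>\<Delta> x. a * S b) = \<epsilon> x *\<^sub>C 1)"

text \<open>Right H-comodule algebra: coaction delta a = a_(0) (x) a_(1).\<close>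
definition comodule_algebra ::
  "('h::complex_algebra_1 \<Rightarrow> ('h \<times> 'h) list) \<Rightarrow> ('h \<Rightarrow> complex)
   \<Rightarrow> ('a::complex_algebra_1 \<Rightarrow> ('a \<times> 'h) list) \<Rightarrow> bool" where
  "comodule_algebra \<Delta> \<epsilon> \<delta> \<longleftrightarrow>
     (\<forall>x y. teq2 (\<delta> (x + y)) (\<delta> x @ \<delta> y)) \<and>
     (\<forall>c x. teq2 (\<delta> (c *\<^sub>C x)) (map (\<lambda>(a, h). (c *\<^sub>C a, h)) (\<delta> x))) \<and>
     (\<forall>x y. teq2 (\<delta> (x * y)) (tmult (\<delta> x) (\<delta> y))) \<and> teq2 (\<delta> 1) [(1, 1)] \<and>
     (\<forall>x. teq3 (concat (map (\<lambda>(a, h). map (\<lambda>(b, k). (b, k, h)) (\<delta> a)) (\<delta> x)))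
                (concat (map (\<lambda>(a, h). map (\<lambda>(h1, h2). (a, h1, h2)) (\<Delta> h)) (\<delta> x)))) \<and>
     (\<forall>x. (\<Sum>(a, h)\<leftarrow>\<delta> x. \<epsilon> h *\<^sub>C a) = x)"

definition coinvariants :: "('a::complex_algebra_1 \<Rightarrow> ('a \<times> 'h::complex_algebra_1) list) \<Rightarrow> 'a set" where
  "coinvariants \<delta> = {a. teq2 (\<delta> a) [(a, 1)]}"

definition chi :: "('a::complex_algebra_1 \<Rightarrow> ('a \<times> 'h::complex_algebra_1) list)
    \<Rightarrow> ('a \<times> 'a) list \<Rightarrow> ('a \<times> 'h) list" where
  "chi \<delta> xs = concat (map (\<lambda>(a', a). map (\<lambda>(a0, h). (a' * a0, h)) (\<delta> a)) xs)"

definition galois_object ::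
  "('h::complex_algebra_1 \<Rightarrow> ('h \<times> 'h) list) \<Rightarrow> ('h \<Rightarrow> complex)
   \<Rightarrow> ('a::complex_algebra_1 \<Rightarrow> ('a \<times> 'h) list) \<Rightarrow> bool" where
  "galois_object \<Delta> \<epsilon> \<delta> \<longleftrightarrow>
     comodule_algebra \<Delta> \<epsilon> \<delta> \<and>
     coinvariants \<delta> = range (\<lambda>c. c *\<^sub>C (1::'a)) \<and>
     \<comment> \<open>chi : A (x) A -> A (x) H is bijective\<close>
     (\<forall>xs ys. teq2 (chi \<delta> xs) (chi \<delta> ys) \<longrightarrow> teq2 xs ys) \<and>
     (\<forall>zs. \<exists>xs. teq2 (chi \<delta> xs) zs)"

text \<open>Translation map tau(h) = chi^{-1}(1 (x) h) = h<1> (x) h<2> (a representative).\<close>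
definition tau :: "('a::complex_algebra_1 \<Rightarrow> ('a \<times> 'h::complex_algebra_1) list) \<Rightarrow> 'h \<Rightarrow> ('a \<times> 'a) list" where
  "tau \<delta> h = (SOME xs. teq2 (chi \<delta> xs) [(1, h)])"

section \<open>The Ehresmann--Schauenburg Hopf algebra C(A,H) = (A (x) A)^{coH}\<close>

definition esC :: "('a::complex_algebra_1 \<Rightarrow> ('a \<times> 'h::complex_algebra_1) list) \<Rightarrow> ('a \<times> 'a) list set" where
  "esC \<delta> = {xs. teq3
      (concat (map (\<lambda>(a, b). concat (map (\<lambda>(a0, h). map (\<lambda>(b0, k). (a0, b0, h * k)) (\<delta> b)) (\<delta> a))) xs))
      (map (\<lambda>(a, b). (a, b, 1)) xs)}"

definition esC_mult :: "('a::complex_algebra_1 \<times> 'a) list \<Rightarrow> ('a \<times> 'a) list \<Rightarrow> ('a \<times> 'a) list" where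
  "esC_mult xs ys = concat (map (\<lambda>(a, b). map (\<lambda>(a', b'). (a * a', b' * b)) ys) xs)"

definition esC_coprod :: "('a::complex_algebra_1 \<Rightarrow> ('a \<times> 'h::complex_algebra_1) list)
    \<Rightarrow> ('a \<times> 'a) list \<Rightarrow> (('a \<times> 'a) \<times> ('a \<times> 'a)) list" where
  "esC_coprod \<delta> xs = concat (map (\<lambda>(a, b). concat (map (\<lambda>(a0, h).
      map (\<lambda>(t1, t2). ((a0, t1), (t2, b))) (tau \<delta> h)) (\<delta> a))) xs)"

definition esC_antipode :: "('a::complex_algebra_1 \<Rightarrow> ('a \<times> 'h::complex_algebra_1) list)
    \<Rightarrow> ('a \<times> 'a) list \<Rightarrow> ('a \<times> 'a) list" where
  "esC_antipode \<delta> xs = concat (map (\<lambda>(a, b). concat (map (\<lambda>(b0, h).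
      map (\<lambda>(u1, u2). (b0, u1 * a * u2)) (tau \<delta> h)) (\<delta> b))) xs)"

text \<open>A linear functional on A (x) A is the same as a bilinear form beta on A; its value on
a tensor is the sum of beta over the elementary tensors.\<close>
definition lfun :: "('a::complex_algebra_1 \<Rightarrow> 'a \<Rightarrow> complex) \<Rightarrow> ('a \<times> 'a) list \<Rightarrow> complex" where
  "lfun \<beta> xs = (\<Sum>(a, b)\<leftarrow>xs. \<beta> a b)"

text \<open>phi = lfun beta is a character of C(A,H): a unital algebra map C(A,H) -> C
(linearity is built in).\<close>
definition esC_character :: "('a::complex_algebra_1 \<Rightarrow> ('a \<times> 'h::complex_algebra_1) list)
    \<Rightarrow> ('a \<Rightarrow> 'a \<Rightarrow> complex) \<Rightarrow> bool" where
  "esC_character \<delta> \<beta> \<longleftrightarrow> bilin \<beta> \<and>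
     lfun \<beta> [(1, 1)] = 1 \<and>
     (\<forall>xs\<in>esC \<delta>. \<forall>ys\<in>esC \<delta>. lfun \<beta> (esC_mult xs ys) = lfun \<beta> xs * lfun \<beta> ys)"

definition Fphi :: "('a::complex_algebra_1 \<Rightarrow> ('a \<times> 'h::complex_algebra_1) list)
    \<Rightarrow> ('a \<Rightarrow> 'a \<Rightarrow> complex) \<Rightarrow> 'a \<Rightarrow> 'a" where
  "Fphi \<delta> \<beta> a = (\<Sum>(a0, h)\<leftarrow>\<delta> a. \<Sum>(t1, t2)\<leftarrow>tau \<delta> h. \<beta> a0 t1 *\<^sub>C t2)"

definition Ad :: "('a::complex_algebra_1 \<Rightarrow> ('a \<times> 'h::complex_algebra_1) list)
    \<Rightarrow> ('a \<Rightarrow> 'a \<Rightarrow> complex) \<Rightarrow> ('a \<times> 'a) list \<Rightarrow> ('a \<times> 'a) list" where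
  "Ad \<delta> \<beta> xs = map (\<lambda>(a, b). (Fphi \<delta> \<beta> a, Fphi \<delta> \<beta> b)) xs"

text \<open>coinn(phi)(c) = phi(c_(1)) c_(2) phi(S_C(c_(3))), where
c_(1) (x) c_(2) (x) c_(3) = (id (x) Delta_C) Delta_C(c).\<close>
definition coinn :: "('a::complex_algebra_1 \<Rightarrow> ('a \<times> 'h::complex_algebra_1) list)
    \<Rightarrow> ('a \<Rightarrow> 'a \<Rightarrow> complex) \<Rightarrow> ('a \<times> 'a) list \<Rightarrow> ('a \<times> 'a) list" where
  "coinn \<delta> \<beta> xs = concat (map (\<lambda>(c1, d). map (\<lambda>(c2, c3).
      ((lfun \<beta> [c1] * lfun \<beta> (esC_antipode \<delta> [c3])) *\<^sub>C fst c2, snd c2))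
      (esC_coprod \<delta> [d])) (esC_coprod \<delta> xs))"

end

theory Submission
  imports Defs
begin

(*
  For c in C(A,H) one has (phi (x) id) Delta_C(c) = (F_phi (x) id)(c).  Since F_phi is H-colinear,
  w = (F_phi (x) id)(c) lies again in C(A,H), and coinn(phi)(c) = (id (x) phi S_C) Delta_C(w).
  For w = u (x) v in C(A,H) the right-hand side is
    u_(0) (x) u_(1)<1> phi(v_(0) (x) v_(1)<1> u_(1)<2> v_(1)<2>),
  and coinvariance of w makes u_(1)<2> v_(1)<2> a scalar.  It can therefore be moved into the first
  tensor leg, where h<1> h<2> = eps(h) 1 and the counit leave u (x) phi(v_(0) (x) v_(1)<1>) v_(1)<2>,
  that is (id (x) F_phi)(w).
*)

section \<open>Multilinear forms and tensors\<close>

lemma scaleC_zero_right [simp]: "c *\<^sub>C (0::'a::complex_algebra_1) = 0"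
  by (metis add_cancel_right_right add_0 scaleC_add_right)

lemma scaleC_zero_left [simp]: "(0::complex) *\<^sub>C (x::'a::complex_algebra_1) = 0"
  by (metis add_cancel_right_right add_0 scaleC_add_left)

lemma sum_list_concat_map: "sum_list (map f (concat xss)) = (\<Sum>xs\<leftarrow>xss. sum_list (map f xs))"
  by (induct xss) auto

lemma sum_list_case_prod_cong:
  "(\<And>a b. (a, b) \<in> set xs \<Longrightarrow> f a b = g a b) \<Longrightarrow> (\<Sum>(a, b)\<leftarrow>xs. f a b) = (\<Sum>(a, b)\<leftarrow>xs. g a b)"
  by (rule arg_cong[where f = sum_list], rule map_cong) auto

lemma sum_list_case_prod_const_mult:
  "(\<Sum>(a, b)\<leftarrow>xs. c * f a b) = (c::'c::semiring_0) * (\<Sum>(a, b)\<leftarrow>xs. f a b)"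
  by (induct xs) (auto simp: distrib_left)

lemma sum_list_swap:
  "(\<Sum>x\<leftarrow>L. \<Sum>y\<leftarrow>M. F x y) = (\<Sum>y\<leftarrow>M. \<Sum>x\<leftarrow>L. F x y :: 'z::comm_monoid_add)"
  by (induct L) (simp_all add: sum_list_addf)

lemma sum_list_case_prod_swap:
  "(\<Sum>(a, b)\<leftarrow>L. \<Sum>(c, d)\<leftarrow>M. F a b c d) = (\<Sum>(c, d)\<leftarrow>M. \<Sum>(a, b)\<leftarrow>L. F a b c d :: 'z::comm_monoid_add)"
  using sum_list_swap[where F = "\<lambda>(a, b) (c, d). F a b c d" and L = L and M = M] by (simp add: split_def)

named_theorems clinear_intros

lemma clinearI: "(\<And>x y. f (x + y) = f x + f y) \<Longrightarrow> (\<And>c x. f (c *\<^sub>C x) = c * f x) \<Longrightarrow> clinear f"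
  by (simp add: clinear_def)

lemma clinear_add: "clinear f \<Longrightarrow> f (x + y) = f x + f y"
  by (simp add: clinear_def)

lemma clinear_scaleC: "clinear f \<Longrightarrow> f (c *\<^sub>C x) = c * f x"
  by (simp add: clinear_def)

lemma clinear_zero: "clinear f \<Longrightarrow> f 0 = 0"
  using clinear_scaleC[of f 0 0] by simp

lemma clinear_sum_list_case_prod: "clinear f \<Longrightarrow> f (\<Sum>(a, b)\<leftarrow>L. g a b) = (\<Sum>(a, b)\<leftarrow>L. f (g a b))"
  by (induct L) (auto simp: clinear_zero clinear_add)

lemma bilinI [clinear_intros]: "(\<And>y. clinear (\<lambda>x. G x y)) \<Longrightarrow> (\<And>x. clinear (\<lambda>y. G x y)) \<Longrightarrow> bilin G"
  by (simp add: bilin_def)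

lemma bilin_clinear: "bilin G \<Longrightarrow> clinear (\<lambda>x. G x b)" "bilin G \<Longrightarrow> clinear (\<lambda>y. G a y)"
  by (simp_all add: bilin_def)

lemma trilinI [clinear_intros]:
  "(\<And>y z. clinear (\<lambda>x. G x y z)) \<Longrightarrow> (\<And>x z. clinear (\<lambda>y. G x y z)) \<Longrightarrow> (\<And>x y. clinear (\<lambda>z. G x y z))
    \<Longrightarrow> trilin G"
  by (simp add: trilin_def)

definition lin6 :: "('a::complex_algebra_1 \<Rightarrow> 'a \<Rightarrow> 'a \<Rightarrow> 'a \<Rightarrow> 'a \<Rightarrow> 'a \<Rightarrow> complex) \<Rightarrow> bool" where
  "lin6 G \<longleftrightarrow> (\<forall>b c d e g. clinear (\<lambda>x. G x b c d e g)) \<and> (\<forall>a c d e g. clinear (\<lambda>x. G a x c d e g))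
     \<and> (\<forall>a b d e g. clinear (\<lambda>x. G a b x d e g)) \<and> (\<forall>a b c e g. clinear (\<lambda>x. G a b c x e g))
     \<and> (\<forall>a b c d g. clinear (\<lambda>x. G a b c d x g)) \<and> (\<forall>a b c d e. clinear (\<lambda>x. G a b c d e x))"

lemma lin6I [clinear_intros]:
  "(\<And>b c d e g. clinear (\<lambda>x. G x b c d e g)) \<Longrightarrow> (\<And>a c d e g. clinear (\<lambda>x. G a x c d e g))
    \<Longrightarrow> (\<And>a b d e g. clinear (\<lambda>x. G a b x d e g)) \<Longrightarrow> (\<And>a b c e g. clinear (\<lambda>x. G a b c x e g))
    \<Longrightarrow> (\<And>a b c d g. clinear (\<lambda>x. G a b c d x g)) \<Longrightarrow> (\<And>a b c d e. clinear (\<lambda>x. G a b c d e x))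
    \<Longrightarrow> lin6 G"
  by (simp add: lin6_def)

definition clinear_map :: "('a::complex_algebra_1 \<Rightarrow> 'b::complex_algebra_1) \<Rightarrow> bool" where
  "clinear_map g \<longleftrightarrow> (\<forall>x y. g (x + y) = g x + g y) \<and> (\<forall>c x. g (c *\<^sub>C x) = c *\<^sub>C g x)"

lemma clinear_map_id [clinear_intros]: "clinear_map (\<lambda>x. x)"
  by (simp add: clinear_map_def)

lemma clinear_map_mult_left [clinear_intros]: "clinear_map g \<Longrightarrow> clinear_map (\<lambda>x. a * g x)"
  by (simp add: clinear_map_def distrib_left scaleC_mult_right)

lemma clinear_map_mult_right [clinear_intros]: "clinear_map g \<Longrightarrow> clinear_map (\<lambda>x. g x * b)"
  by (simp add: clinear_map_def distrib_right scaleC_mult_left)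

lemma bilin_clinear_comp:
  assumes "bilin G"
  shows "clinear_map g \<Longrightarrow> clinear (\<lambda>x. G (g x) b)" and "clinear_map h \<Longrightarrow> clinear (\<lambda>x. G a (h x))"
  using assms by (simp_all add: bilin_def clinear_map_def clinear_def)

lemma trilin_clinear_comp:
  assumes "trilin G"
  shows "clinear_map g \<Longrightarrow> clinear (\<lambda>x. G (g x) b c)" and "clinear_map h \<Longrightarrow> clinear (\<lambda>x. G a (h x) c)"
    and "clinear_map k \<Longrightarrow> clinear (\<lambda>x. G a b (k x))"
  using assms by (simp_all add: trilin_def clinear_map_def clinear_def)

lemma lin6_clinear_comp:
  assumes "lin6 G" and "clinear_map h"
  shows "clinear (\<lambda>x. G (h x) b c d e g)" and "clinear (\<lambda>x. G a (h x) c d e g)"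
    and "clinear (\<lambda>x. G a b (h x) d e g)" and "clinear (\<lambda>x. G a b c (h x) e g)"
    and "clinear (\<lambda>x. G a b c d (h x) g)" and "clinear (\<lambda>x. G a b c d e (h x))"
  using assms by (simp_all add: lin6_def clinear_map_def clinear_def)

lemma clinear_compose_sum_list [clinear_intros]:
  "(\<And>a b. clinear (\<lambda>x. G a b x)) \<Longrightarrow> clinear (\<lambda>x. \<Sum>(a, b)\<leftarrow>L. G a b x)"
  unfolding clinear_def by (induct L) (auto simp: algebra_simps)

lemma clinear_mult_const [clinear_intros]: "clinear f \<Longrightarrow> clinear (\<lambda>x. f x * c)"
  unfolding clinear_def by (auto simp: algebra_simps)

lemma clinear_const_mult [clinear_intros]: "clinear f \<Longrightarrow> clinear (\<lambda>x. c * f x)"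
  unfolding clinear_def by (auto simp: algebra_simps)

lemma teq2I: "(\<And>f. bilin f \<Longrightarrow> (\<Sum>(x, y)\<leftarrow>xs. f x y) = (\<Sum>(x, y)\<leftarrow>ys. f x y)) \<Longrightarrow> teq2 xs ys"
  by (simp add: teq2_def)

lemma teq2D: "teq2 xs ys \<Longrightarrow> bilin f \<Longrightarrow> (\<Sum>(x, y)\<leftarrow>xs. f x y) = (\<Sum>(x, y)\<leftarrow>ys. f x y)"
  by (simp add: teq2_def)

lemma teq3I:
  "(\<And>f. trilin f \<Longrightarrow> (\<Sum>(x, y, z)\<leftarrow>xs. f x y z) = (\<Sum>(x, y, z)\<leftarrow>ys. f x y z)) \<Longrightarrow> teq3 xs ys"
  by (simp add: teq3_def)

lemma teq3D: "teq3 xs ys \<Longrightarrow> trilin f \<Longrightarrow> (\<Sum>(x, y, z)\<leftarrow>xs. f x y z) = (\<Sum>(x, y, z)\<leftarrow>ys. f x y z)"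
  by (simp add: teq3_def)

definition tensor_linear ::
    "('x::complex_algebra_1 \<Rightarrow> ('a::complex_algebra_1 \<times> 'b::complex_algebra_1) list) \<Rightarrow> bool" where
  "tensor_linear F \<longleftrightarrow> (\<forall>x y. teq2 (F (x + y)) (F x @ F y)) \<and>
     (\<forall>c x. teq2 (F (c *\<^sub>C x)) (map (\<lambda>(a, b). (c *\<^sub>C a, b)) (F x)))"

lemma tensor_linear_clinear:
  assumes F: "tensor_linear F" and g: "clinear_map g" and G: "bilin G"
  shows "clinear (\<lambda>x. \<Sum>(a, b)\<leftarrow>F (g x). G a b)"
proof (rule clinearI)
  fix x y
  have "(\<Sum>(a, b)\<leftarrow>F (g x + g y). G a b) = (\<Sum>(a, b)\<leftarrow>F (g x) @ F (g y). G a b)"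
    using F by (intro teq2D[OF _ G]) (simp add: tensor_linear_def)
  then show "(\<Sum>(a, b)\<leftarrow>F (g (x + y)). G a b) = (\<Sum>(a, b)\<leftarrow>F (g x). G a b) + (\<Sum>(a, b)\<leftarrow>F (g y). G a b)"
    using g by (simp add: clinear_map_def)
next
  fix c x
  have "(\<Sum>(a, b)\<leftarrow>F (c *\<^sub>C g x). G a b) = (\<Sum>(a, b)\<leftarrow>map (\<lambda>(a, b). (c *\<^sub>C a, b)) (F (g x)). G a b)"
    using F by (intro teq2D[OF _ G]) (simp add: tensor_linear_def)
  also have "\<dots> = c * (\<Sum>(a, b)\<leftarrow>F (g x). G a b)"
    by (simp add: o_def split_def clinear_scaleC[OF bilin_clinear(1)[OF G]] sum_list_const_mult)
  finally show "(\<Sum>(a, b)\<leftarrow>F (g (c *\<^sub>C x)). G a b) = c * (\<Sum>(a, b)\<leftarrow>F (g x). G a b)"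
    using g by (simp add: clinear_map_def)
qed

section \<open>The translation map of a Galois object\<close>

lemma chi_sum: "(\<Sum>(p, q)\<leftarrow>chi \<delta> xs. g p q) = (\<Sum>(a', a)\<leftarrow>xs. \<Sum>(a0, h)\<leftarrow>\<delta> a. g (a' * a0) h)"
  by (induct xs) (auto simp: chi_def o_def split_def)

locale hopf_galois =
  fixes \<Delta> :: "'h::complex_algebra_1 \<Rightarrow> ('h \<times> 'h) list"
    and \<epsilon> :: "'h \<Rightarrow> complex"
    and S :: "'h \<Rightarrow> 'h"
    and \<delta> :: "'a::complex_algebra_1 \<Rightarrow> ('a \<times> 'h) list"
  assumes hopf: "hopf_algebra \<Delta> \<epsilon> S"
    and galois: "galois_object \<Delta> \<epsilon> \<delta>"
begin

lemma tensor_linear_Delta: "tensor_linear \<Delta>"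
  using hopf by (simp add: hopf_algebra_def tensor_linear_def)

lemma tensor_linear_delta: "tensor_linear \<delta>"
  using galois by (simp add: galois_object_def comodule_algebra_def tensor_linear_def)

lemma clinear_eps [clinear_intros]: "clinear \<epsilon>"
  using hopf by (simp add: hopf_algebra_def)

lemma delta_counit: "(\<Sum>(a, h)\<leftarrow>\<delta> x. \<epsilon> h *\<^sub>C a) = x"
  using galois by (simp add: galois_object_def comodule_algebra_def)

lemma delta_mult:
  assumes "bilin G"
  shows "(\<Sum>(a, h)\<leftarrow>\<delta> (x * y). G a h) = (\<Sum>(a, h)\<leftarrow>\<delta> x. \<Sum>(b, k)\<leftarrow>\<delta> y. G (a * b) (h * k))"
proof -
  have "(\<Sum>(a, h)\<leftarrow>\<delta> (x * y). G a h) = (\<Sum>(a, h)\<leftarrow>tmult (\<delta> x) (\<delta> y). G a h)"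
    using galois by (intro teq2D[OF _ assms]) (simp add: galois_object_def comodule_algebra_def)
  then show ?thesis
    by (simp add: tmult_def sum_list_concat_map o_def split_def)
qed

lemma delta_one: "bilin G \<Longrightarrow> (\<Sum>(a, h)\<leftarrow>\<delta> 1. G a h) = G 1 1"
  using galois teq2D[of "\<delta> 1" "[(1, 1)]" G] by (simp add: galois_object_def comodule_algebra_def)

lemma delta_coassoc:
  assumes "trilin G"
  shows "(\<Sum>(a, h)\<leftarrow>\<delta> x. \<Sum>(b, k)\<leftarrow>\<delta> a. G b k h) = (\<Sum>(a, h)\<leftarrow>\<delta> x. \<Sum>(h1, h2)\<leftarrow>\<Delta> h. G a h1 h2)"
proof -
  have "teq3 (concat (map (\<lambda>(a, h). map (\<lambda>(b, k). (b, k, h)) (\<delta> a)) (\<delta> x)))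
          (concat (map (\<lambda>(a, h). map (\<lambda>(h1, h2). (a, h1, h2)) (\<Delta> h)) (\<delta> x)))"
    using galois by (simp add: galois_object_def comodule_algebra_def)
  from teq3D[OF this assms] show ?thesis
    by (simp add: sum_list_concat_map o_def split_def)
qed

lemma teq2_chiI:
  assumes "\<And>g. bilin g \<Longrightarrow>
    (\<Sum>(a', a)\<leftarrow>xs. \<Sum>(a0, h)\<leftarrow>\<delta> a. g (a' * a0) h) = (\<Sum>(a', a)\<leftarrow>ys. \<Sum>(a0, h)\<leftarrow>\<delta> a. g (a' * a0) h)"
  shows "teq2 xs ys"
proof -
  have "teq2 (chi \<delta> xs) (chi \<delta> ys)"
    by (rule teq2I) (simp add: chi_sum assms)
  then show ?thesis
    using galois by (simp add: galois_object_def)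
qed

lemma chi_tau:
  assumes "bilin g"
  shows "(\<Sum>(t1, t2)\<leftarrow>tau \<delta> h. \<Sum>(e, j)\<leftarrow>\<delta> t2. g (t1 * e) j) = g 1 h"
proof -
  have "teq2 (chi \<delta> (tau \<delta> h)) [(1, h)]"
    unfolding tau_def by (rule someI_ex) (use galois in \<open>simp add: galois_object_def\<close>)
  from teq2D[OF this assms] show ?thesis
    by (simp add: chi_sum)
qed

lemma tensor_linear_tau: "tensor_linear (tau \<delta>)"
  unfolding tensor_linear_def
proof (intro allI conjI)
  fix x y
  show "teq2 (tau \<delta> (x + y)) (tau \<delta> x @ tau \<delta> y)"
  proof (rule teq2_chiI)
    fix g :: "'a \<Rightarrow> 'h \<Rightarrow> complex"
    assume g: "bilin g"
    show "(\<Sum>(a', a)\<leftarrow>tau \<delta> (x + y). \<Sum>(a0, h)\<leftarrow>\<delta> a. g (a' * a0) h)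
        = (\<Sum>(a', a)\<leftarrow>tau \<delta> x @ tau \<delta> y. \<Sum>(a0, h)\<leftarrow>\<delta> a. g (a' * a0) h)"
      by (simp add: chi_tau[OF g] clinear_add[OF bilin_clinear(2)[OF g]])
  qed
next
  fix c x
  show "teq2 (tau \<delta> (c *\<^sub>C x)) (map (\<lambda>(a, b). (c *\<^sub>C a, b)) (tau \<delta> x))"
  proof (rule teq2_chiI)
    fix g :: "'a \<Rightarrow> 'h \<Rightarrow> complex"
    assume g: "bilin g"
    have "(\<Sum>(a', a)\<leftarrow>tau \<delta> (c *\<^sub>C x). \<Sum>(a0, h)\<leftarrow>\<delta> a. g (a' * a0) h) = c * g 1 x"
      using chi_tau[OF g] clinear_scaleC[OF bilin_clinear(2)[OF g]] by simp
    also have "\<dots> = c * (\<Sum>(a', a)\<leftarrow>tau \<delta> x. \<Sum>(a0, h)\<leftarrow>\<delta> a. g (a' * a0) h)"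
      using chi_tau[OF g] by simp
    also have "\<dots> = (\<Sum>(a', a)\<leftarrow>tau \<delta> x. \<Sum>(a0, h)\<leftarrow>\<delta> a. g ((c *\<^sub>C a') * a0) h)"
      by (simp add: sum_list_case_prod_const_mult scaleC_mult_left
          clinear_scaleC[OF bilin_clinear(1)[OF g]])
    finally show "(\<Sum>(a', a)\<leftarrow>tau \<delta> (c *\<^sub>C x). \<Sum>(a0, h)\<leftarrow>\<delta> a. g (a' * a0) h)
        = (\<Sum>(a', a)\<leftarrow>map (\<lambda>(a, b). (c *\<^sub>C a, b)) (tau \<delta> x). \<Sum>(a0, h)\<leftarrow>\<delta> a. g (a' * a0) h)"
      by (simp add: o_def split_def)
  qed
qed

lemmas clinear_sum_Delta [clinear_intros] = tensor_linear_clinear[OF tensor_linear_Delta]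
lemmas clinear_sum_delta [clinear_intros] = tensor_linear_clinear[OF tensor_linear_delta]
lemmas clinear_sum_tau [clinear_intros] = tensor_linear_clinear[OF tensor_linear_tau]

lemma delta_tau:
  assumes g: "bilin g"
  shows "(\<Sum>(a0, h)\<leftarrow>\<delta> a. \<Sum>(t1, t2)\<leftarrow>tau \<delta> h. g (a0 * t1) t2) = g 1 a"
proof -
  have "teq2 (concat (map (\<lambda>(a0, h). map (\<lambda>(t1, t2). (a0 * t1, t2)) (tau \<delta> h)) (\<delta> a))) [(1, a)]"
  proof (rule teq2_chiI)
    fix g' :: "'a \<Rightarrow> 'h \<Rightarrow> complex"
    assume g': "bilin g'"
    have g'_left: "bilin (\<lambda>p j. g' (x * p) j)" for x
      by (intro clinear_intros bilin_clinear_comp[OF g'])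
    have "(\<Sum>(a', b)\<leftarrow>concat (map (\<lambda>(a0, h). map (\<lambda>(t1, t2). (a0 * t1, t2)) (tau \<delta> h)) (\<delta> a)).
            \<Sum>(e, j)\<leftarrow>\<delta> b. g' (a' * e) j)
        = (\<Sum>(a0, h)\<leftarrow>\<delta> a. \<Sum>(t1, t2)\<leftarrow>tau \<delta> h. \<Sum>(e, j)\<leftarrow>\<delta> t2. g' (a0 * (t1 * e)) j)"
      by (simp add: sum_list_concat_map o_def split_def mult.assoc)
    also have "\<dots> = (\<Sum>(a0, h)\<leftarrow>\<delta> a. g' a0 h)"
      by (intro sum_list_case_prod_cong) (simp add: chi_tau[OF g'_left])
    finally show "(\<Sum>(a', b)\<leftarrow>concat (map (\<lambda>(a0, h). map (\<lambda>(t1, t2). (a0 * t1, t2)) (tau \<delta> h)) (\<delta> a)).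
            \<Sum>(e, j)\<leftarrow>\<delta> b. g' (a' * e) j) = (\<Sum>(a', b)\<leftarrow>[(1, a)]. \<Sum>(e, j)\<leftarrow>\<delta> b. g' (a' * e) j)"
      by simp
  qed
  from teq2D[OF this g] show ?thesis
    by (simp add: sum_list_concat_map o_def split_def)
qed

lemma tau_one:
  assumes g: "bilin g"
  shows "(\<Sum>(t1, t2)\<leftarrow>tau \<delta> 1. g t1 t2) = g 1 1"
proof -
  have "teq2 (tau \<delta> 1) [(1, 1)]"
    by (rule teq2_chiI) (simp add: chi_tau delta_one)
  from teq2D[OF this g] show ?thesis
    by simp
qed

lemma tau_mult:
  assumes l: "clinear l"
  shows "(\<Sum>(t1, t2)\<leftarrow>tau \<delta> h. l (t1 * t2)) = \<epsilon> h * l 1"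
proof -
  have l_counit: "l (t1 * t2) = (\<Sum>(e, j)\<leftarrow>\<delta> t2. \<epsilon> j * l (t1 * e))" for t1 t2
  proof -
    have "t1 * t2 = t1 * (\<Sum>(e, j)\<leftarrow>\<delta> t2. \<epsilon> j *\<^sub>C e)"
      by (simp add: delta_counit)
    also have "\<dots> = (\<Sum>(e, j)\<leftarrow>\<delta> t2. \<epsilon> j *\<^sub>C (t1 * e))"
      by (simp add: split_def sum_list_const_mult[symmetric] scaleC_mult_right)
    finally show ?thesis
      by (simp add: clinear_sum_list_case_prod[OF l] clinear_scaleC[OF l])
  qed
  have "bilin (\<lambda>a j. \<epsilon> j * l a)"
    by (intro clinear_intros l)
  from chi_tau[OF this] show ?thesis
    by (subst sum_list_case_prod_cong[OF l_counit])
qed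

lemma tau_delta:
  assumes \<Gamma>: "trilin \<Gamma>"
  shows "(\<Sum>(t1, t2)\<leftarrow>tau \<delta> h. \<Sum>(e, j)\<leftarrow>\<delta> t2. \<Gamma> t1 e j)
    = (\<Sum>(h1, h2)\<leftarrow>\<Delta> h. \<Sum>(t1, t2)\<leftarrow>tau \<delta> h1. \<Gamma> t1 t2 h2)"
proof -
  note lin = trilin_clinear_comp[OF \<Gamma>]
  have "(\<Sum>(t1, t2)\<leftarrow>tau \<delta> h. \<Sum>(e, j)\<leftarrow>\<delta> t2. \<Gamma> t1 e j)
      = (\<Sum>(t1, t2)\<leftarrow>tau \<delta> h. \<Sum>(e, j)\<leftarrow>\<delta> t2. \<Sum>(e0, e1)\<leftarrow>\<delta> e. \<Sum>(q1, q2)\<leftarrow>tau \<delta> e1.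
          \<Gamma> (t1 * (e0 * q1)) q2 j)"
  proof (intro sum_list_case_prod_cong)
    fix t1 e j
    have "bilin (\<lambda>p q. \<Gamma> (t1 * p) q j)"
      by (intro clinear_intros lin)
    from delta_tau[OF this]
    show "\<Gamma> t1 e j = (\<Sum>(e0, e1)\<leftarrow>\<delta> e. \<Sum>(q1, q2)\<leftarrow>tau \<delta> e1. \<Gamma> (t1 * (e0 * q1)) q2 j)"
      by simp
  qed
  also have "\<dots> = (\<Sum>(t1, t2)\<leftarrow>tau \<delta> h. \<Sum>(e, j)\<leftarrow>\<delta> t2. \<Sum>(j1, j2)\<leftarrow>\<Delta> j. \<Sum>(q1, q2)\<leftarrow>tau \<delta> j1.
          \<Gamma> (t1 * (e * q1)) q2 j2)"
    by (intro sum_list_case_prod_cong delta_coassoc) (intro clinear_intros lin)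
  also have "\<dots> = (\<Sum>(h1, h2)\<leftarrow>\<Delta> h. \<Sum>(t1, t2)\<leftarrow>tau \<delta> h1. \<Gamma> t1 t2 h2)"
  proof -
    have "bilin (\<lambda>a j. \<Sum>(j1, j2)\<leftarrow>\<Delta> j. \<Sum>(q1, q2)\<leftarrow>tau \<delta> j1. \<Gamma> (a * q1) q2 j2)"
      by (intro clinear_intros lin)
    from chi_tau[OF this] show ?thesis
      by (simp add: mult.assoc)
  qed
  finally show ?thesis .
qed

lemma esC_coinvariant:
  assumes "w \<in> esC \<delta>" and "trilin \<Phi>"
  shows "(\<Sum>(u, v)\<leftarrow>w. \<Sum>(u0, h)\<leftarrow>\<delta> u. \<Sum>(v0, k)\<leftarrow>\<delta> v. \<Phi> u0 v0 (h * k)) = (\<Sum>(u, v)\<leftarrow>w. \<Phi> u v 1)"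
  using teq3D[OF assms(1)[unfolded esC_def mem_Collect_eq] assms(2)]
  by (simp add: sum_list_concat_map o_def split_def)

lemma delta_counit_clinear: "clinear M \<Longrightarrow> (\<Sum>(u0, h)\<leftarrow>\<delta> u. \<epsilon> h * M u0) = M u"
  using clinear_sum_list_case_prod[of M "\<lambda>a h. \<epsilon> h *\<^sub>C a" "\<delta> u"]
  by (simp add: delta_counit clinear_scaleC)

end

section \<open>Characters of the Ehresmann--Schauenburg Hopf algebra\<close>

(* The coaction is only determined up to teq2, so Fphi cannot be shown to be additive on A;
   it is only ever used through its composites with linear forms. *)
lemma clinear_Fphi_eq:
  "clinear M \<Longrightarrow> M (Fphi \<delta> \<beta> a) = (\<Sum>(a0, h)\<leftarrow>\<delta> a. \<Sum>(t1, t2)\<leftarrow>tau \<delta> h. \<beta> a0 t1 * M t2)"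
  by (simp add: Fphi_def clinear_sum_list_case_prod clinear_scaleC)

lemma esC_coprod_lfun_left:
  assumes "\<And>v. clinear (\<lambda>u. G (u, v))"
  shows "(\<Sum>(c1, d)\<leftarrow>esC_coprod \<delta> xs. lfun \<beta> [c1] * G d) = (\<Sum>(x, y)\<leftarrow>xs. G (Fphi \<delta> \<beta> x, y))"
  by (simp add: esC_coprod_def lfun_def sum_list_concat_map o_def split_def clinear_Fphi_eq[OF assms])

lemma esC_coprod_antipode_sum:
  "(\<Sum>(c2, c3)\<leftarrow>esC_coprod \<delta> [(u, v)]. lfun \<beta> (esC_antipode \<delta> [c3]) * f (fst c2) (snd c2))
    = (\<Sum>(u0, h)\<leftarrow>\<delta> u. \<Sum>(v0, k)\<leftarrow>\<delta> v. \<Sum>(t1, t2)\<leftarrow>tau \<delta> h. \<Sum>(s1, s2)\<leftarrow>tau \<delta> k.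
        \<beta> v0 (s1 * (t2 * s2)) * f u0 t1)"
proof -
  have "(\<Sum>(c2, c3)\<leftarrow>esC_coprod \<delta> [(u, v)]. lfun \<beta> (esC_antipode \<delta> [c3]) * f (fst c2) (snd c2))
    = (\<Sum>(u0, h)\<leftarrow>\<delta> u. \<Sum>(t1, t2)\<leftarrow>tau \<delta> h. \<Sum>(v0, k)\<leftarrow>\<delta> v. \<Sum>(s1, s2)\<leftarrow>tau \<delta> k.
        \<beta> v0 (s1 * (t2 * s2)) * f u0 t1)"
    by (simp add: esC_coprod_def esC_antipode_def lfun_def sum_list_concat_map o_def split_def
      sum_list_mult_const mult.assoc)
  also have "\<dots> = (\<Sum>(u0, h)\<leftarrow>\<delta> u. \<Sum>(v0, k)\<leftarrow>\<delta> v. \<Sum>(t1, t2)\<leftarrow>tau \<delta> h. \<Sum>(s1, s2)\<leftarrow>tau \<delta> k.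
        \<beta> v0 (s1 * (t2 * s2)) * f u0 t1)"
    by (intro sum_list_case_prod_cong) (rule sum_list_case_prod_swap)
  finally show ?thesis .
qed

context hopf_galois
begin

lemma clinear_Fphi:
  assumes M: "clinear M" and \<beta>: "bilin \<beta>"
  shows "clinear (\<lambda>a. M (Fphi \<delta> \<beta> a))"
  unfolding clinear_Fphi_eq[OF M] by (intro clinear_intros bilin_clinear_comp[OF \<beta>] M)

lemma delta_Fphi:
  assumes \<beta>: "bilin \<beta>" and g: "bilin g"
  shows "(\<Sum>(e, j)\<leftarrow>\<delta> (Fphi \<delta> \<beta> a). g e j) = (\<Sum>(a0, h)\<leftarrow>\<delta> a. g (Fphi \<delta> \<beta> a0) h)"
proof -
  note lin = bilin_clinear_comp[OF \<beta>] bilin_clinear_comp[OF g]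
  have "(\<Sum>(e, j)\<leftarrow>\<delta> (Fphi \<delta> \<beta> a). g e j)
      = (\<Sum>(a0, h)\<leftarrow>\<delta> a. \<Sum>(t1, t2)\<leftarrow>tau \<delta> h. \<Sum>(e, j)\<leftarrow>\<delta> t2. \<beta> a0 t1 * g e j)"
    by (subst clinear_Fphi_eq) (intro clinear_intros lin, simp add: sum_list_case_prod_const_mult)
  also have "\<dots> = (\<Sum>(a0, h)\<leftarrow>\<delta> a. \<Sum>(h1, h2)\<leftarrow>\<Delta> h. \<Sum>(t1, t2)\<leftarrow>tau \<delta> h1. \<beta> a0 t1 * g t2 h2)"
    by (intro sum_list_case_prod_cong tau_delta) (intro clinear_intros lin)
  also have "\<dots> = (\<Sum>(a', h)\<leftarrow>\<delta> a. \<Sum>(a0, h1)\<leftarrow>\<delta> a'. \<Sum>(t1, t2)\<leftarrow>tau \<delta> h1. \<beta> a0 t1 * g t2 h)"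
    by (rule delta_coassoc[symmetric]) (intro clinear_intros lin)
  also have "\<dots> = (\<Sum>(a0, h)\<leftarrow>\<delta> a. g (Fphi \<delta> \<beta> a0) h)"
    by (intro sum_list_case_prod_cong) (simp add: clinear_Fphi_eq[OF bilin_clinear(1)[OF g]])
  finally show ?thesis .
qed

lemma esC_map_Fphi:
  assumes \<beta>: "bilin \<beta>" and c: "c \<in> esC \<delta>"
  shows "map (\<lambda>(a, b). (Fphi \<delta> \<beta> a, b)) c \<in> esC \<delta>"
  unfolding esC_def mem_Collect_eq
proof (rule teq3I)
  fix \<Phi> :: "'a \<Rightarrow> 'a \<Rightarrow> 'h \<Rightarrow> complex"
  assume \<Phi>: "trilin \<Phi>"
  note lin = trilin_clinear_comp[OF \<Phi>]
  have "(\<Sum>(u, v)\<leftarrow>c. \<Sum>(e, j)\<leftarrow>\<delta> (Fphi \<delta> \<beta> u). \<Sum>(v0, k)\<leftarrow>\<delta> v. \<Phi> e v0 (j * k))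
      = (\<Sum>(u, v)\<leftarrow>c. \<Sum>(u0, h)\<leftarrow>\<delta> u. \<Sum>(v0, k)\<leftarrow>\<delta> v. \<Phi> (Fphi \<delta> \<beta> u0) v0 (h * k))"
    by (intro sum_list_case_prod_cong delta_Fphi \<beta>) (intro clinear_intros lin)
  also have "\<dots> = (\<Sum>(u, v)\<leftarrow>c. \<Phi> (Fphi \<delta> \<beta> u) v 1)"
    by (intro esC_coinvariant c trilinI clinear_Fphi \<beta>) (intro lin clinear_map_id)+
  finally show "(\<Sum>(x, y, z)\<leftarrow>concat (map (\<lambda>(a, b). concat (map (\<lambda>(a0, h).
        map (\<lambda>(b0, k). (a0, b0, h * k)) (\<delta> b)) (\<delta> a))) (map (\<lambda>(a, b). (Fphi \<delta> \<beta> a, b)) c)). \<Phi> x y z)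
      = (\<Sum>(x, y, z)\<leftarrow>map (\<lambda>(a, b). (a, b, 1)) (map (\<lambda>(a, b). (Fphi \<delta> \<beta> a, b)) c). \<Phi> x y z)"
    by (simp add: sum_list_concat_map o_def split_def)
qed

lemma tau_product:
  assumes \<Gamma>: "lin6 \<Gamma>"
  shows "(\<Sum>(t1, t2)\<leftarrow>tau \<delta> h. \<Sum>(s1, s2)\<leftarrow>tau \<delta> k. \<Gamma> u0 t1 v0 s1 1 (t2 * s2))
    = (\<Sum>(h1, h2)\<leftarrow>\<Delta> h. \<Sum>(k1, k2)\<leftarrow>\<Delta> k. \<Sum>(t1, t2)\<leftarrow>tau \<delta> h1. \<Sum>(s1, s2)\<leftarrow>tau \<delta> k1.
        \<Sum>(r1, r2)\<leftarrow>tau \<delta> (h2 * k2). \<Gamma> u0 t1 v0 s1 (t2 * s2 * r1) r2)"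
proof -
  note lin = lin6_clinear_comp[OF \<Gamma>]
  have "(\<Sum>(t1, t2)\<leftarrow>tau \<delta> h. \<Sum>(s1, s2)\<leftarrow>tau \<delta> k. \<Gamma> u0 t1 v0 s1 1 (t2 * s2))
      = (\<Sum>(t1, t2)\<leftarrow>tau \<delta> h. \<Sum>(s1, s2)\<leftarrow>tau \<delta> k. \<Sum>(z, m)\<leftarrow>\<delta> (t2 * s2). \<Sum>(r1, r2)\<leftarrow>tau \<delta> m.
          \<Gamma> u0 t1 v0 s1 (z * r1) r2)"
    by (intro sum_list_case_prod_cong delta_tau[symmetric]) (intro clinear_intros lin)
  also have "\<dots> = (\<Sum>(t1, t2)\<leftarrow>tau \<delta> h. \<Sum>(s1, s2)\<leftarrow>tau \<delta> k. \<Sum>(e, j)\<leftarrow>\<delta> t2. \<Sum>(d, l)\<leftarrow>\<delta> s2.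
          \<Sum>(r1, r2)\<leftarrow>tau \<delta> (j * l). \<Gamma> u0 t1 v0 s1 (e * d * r1) r2)"
    by (intro sum_list_case_prod_cong delta_mult) (intro clinear_intros lin)
  also have "\<dots> = (\<Sum>(t1, t2)\<leftarrow>tau \<delta> h. \<Sum>(e, j)\<leftarrow>\<delta> t2. \<Sum>(s1, s2)\<leftarrow>tau \<delta> k. \<Sum>(d, l)\<leftarrow>\<delta> s2.
          \<Sum>(r1, r2)\<leftarrow>tau \<delta> (j * l). \<Gamma> u0 t1 v0 s1 (e * d * r1) r2)"
    by (intro sum_list_case_prod_cong) (rule sum_list_case_prod_swap)
  also have "\<dots> = (\<Sum>(h1, h2)\<leftarrow>\<Delta> h. \<Sum>(t1, t2)\<leftarrow>tau \<delta> h1. \<Sum>(s1, s2)\<leftarrow>tau \<delta> k. \<Sum>(d, l)\<leftarrow>\<delta> s2.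
          \<Sum>(r1, r2)\<leftarrow>tau \<delta> (h2 * l). \<Gamma> u0 t1 v0 s1 (t2 * d * r1) r2)"
    by (intro tau_delta) (intro clinear_intros lin)
  also have "\<dots> = (\<Sum>(h1, h2)\<leftarrow>\<Delta> h. \<Sum>(t1, t2)\<leftarrow>tau \<delta> h1. \<Sum>(k1, k2)\<leftarrow>\<Delta> k. \<Sum>(s1, s2)\<leftarrow>tau \<delta> k1.
          \<Sum>(r1, r2)\<leftarrow>tau \<delta> (h2 * k2). \<Gamma> u0 t1 v0 s1 (t2 * s2 * r1) r2)"
    by (intro sum_list_case_prod_cong tau_delta) (intro clinear_intros lin)
  also have "\<dots> = (\<Sum>(h1, h2)\<leftarrow>\<Delta> h. \<Sum>(k1, k2)\<leftarrow>\<Delta> k. \<Sum>(t1, t2)\<leftarrow>tau \<delta> h1. \<Sum>(s1, s2)\<leftarrow>tau \<delta> k1.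
          \<Sum>(r1, r2)\<leftarrow>tau \<delta> (h2 * k2). \<Gamma> u0 t1 v0 s1 (t2 * s2 * r1) r2)"
    by (intro sum_list_case_prod_cong) (rule sum_list_case_prod_swap)
  finally show ?thesis .
qed

(* For u (x) v in C(A,H), the product u_(1)<2> v_(1)<2> is a scalar multiple of 1: it may change
   places with 1 in the last two arguments of any 6-linear form. *)
lemma esC_tau_product_scalar:
  assumes \<Gamma>: "lin6 \<Gamma>" and w: "w \<in> esC \<delta>"
  shows "(\<Sum>(u, v)\<leftarrow>w. \<Sum>(u0, h)\<leftarrow>\<delta> u. \<Sum>(v0, k)\<leftarrow>\<delta> v. \<Sum>(t1, t2)\<leftarrow>tau \<delta> h. \<Sum>(s1, s2)\<leftarrow>tau \<delta> k.
        \<Gamma> u0 t1 v0 s1 1 (t2 * s2))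
    = (\<Sum>(u, v)\<leftarrow>w. \<Sum>(u0, h)\<leftarrow>\<delta> u. \<Sum>(v0, k)\<leftarrow>\<delta> v. \<Sum>(t1, t2)\<leftarrow>tau \<delta> h. \<Sum>(s1, s2)\<leftarrow>tau \<delta> k.
        \<Gamma> u0 t1 v0 s1 (t2 * s2) 1)"
proof -
  note lin = lin6_clinear_comp[OF \<Gamma>]
  define \<Phi> where "\<Phi> u v m = (\<Sum>(u0, h)\<leftarrow>\<delta> u. \<Sum>(v0, k)\<leftarrow>\<delta> v. \<Sum>(t1, t2)\<leftarrow>tau \<delta> h.
      \<Sum>(s1, s2)\<leftarrow>tau \<delta> k. \<Sum>(r1, r2)\<leftarrow>tau \<delta> m. \<Gamma> u0 t1 v0 s1 (t2 * s2 * r1) r2)" for u v m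
  have "(\<Sum>(u, v)\<leftarrow>w. \<Sum>(u0, h)\<leftarrow>\<delta> u. \<Sum>(v0, k)\<leftarrow>\<delta> v. \<Sum>(t1, t2)\<leftarrow>tau \<delta> h. \<Sum>(s1, s2)\<leftarrow>tau \<delta> k.
        \<Gamma> u0 t1 v0 s1 1 (t2 * s2))
      = (\<Sum>(u, v)\<leftarrow>w. \<Sum>(u0, h)\<leftarrow>\<delta> u. \<Sum>(h1, h2)\<leftarrow>\<Delta> h. \<Sum>(v0, k)\<leftarrow>\<delta> v. \<Sum>(k1, k2)\<leftarrow>\<Delta> k.
        \<Sum>(t1, t2)\<leftarrow>tau \<delta> h1. \<Sum>(s1, s2)\<leftarrow>tau \<delta> k1. \<Sum>(r1, r2)\<leftarrow>tau \<delta> (h2 * k2).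
        \<Gamma> u0 t1 v0 s1 (t2 * s2 * r1) r2)"
    by (simp only: tau_product[OF \<Gamma>]) (intro sum_list_case_prod_cong sum_list_case_prod_swap)
  also have "\<dots> = (\<Sum>(u, v)\<leftarrow>w. \<Sum>(u0, h)\<leftarrow>\<delta> u. \<Sum>(h1, h2)\<leftarrow>\<Delta> h. \<Sum>(v', k2)\<leftarrow>\<delta> v. \<Sum>(v0, k1)\<leftarrow>\<delta> v'.
        \<Sum>(t1, t2)\<leftarrow>tau \<delta> h1. \<Sum>(s1, s2)\<leftarrow>tau \<delta> k1. \<Sum>(r1, r2)\<leftarrow>tau \<delta> (h2 * k2).
        \<Gamma> u0 t1 v0 s1 (t2 * s2 * r1) r2)"
    by (intro sum_list_case_prod_cong delta_coassoc[symmetric]) (intro clinear_intros lin)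
  also have "\<dots> = (\<Sum>(u, v)\<leftarrow>w. \<Sum>(u', h2)\<leftarrow>\<delta> u. \<Sum>(u0, h1)\<leftarrow>\<delta> u'. \<Sum>(v', k2)\<leftarrow>\<delta> v. \<Sum>(v0, k1)\<leftarrow>\<delta> v'.
        \<Sum>(t1, t2)\<leftarrow>tau \<delta> h1. \<Sum>(s1, s2)\<leftarrow>tau \<delta> k1. \<Sum>(r1, r2)\<leftarrow>tau \<delta> (h2 * k2).
        \<Gamma> u0 t1 v0 s1 (t2 * s2 * r1) r2)"
    by (intro sum_list_case_prod_cong delta_coassoc[symmetric]) (intro clinear_intros lin)
  also have "\<dots> = (\<Sum>(u, v)\<leftarrow>w. \<Sum>(u', h)\<leftarrow>\<delta> u. \<Sum>(v', k)\<leftarrow>\<delta> v. \<Phi> u' v' (h * k))"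
    unfolding \<Phi>_def by (intro sum_list_case_prod_cong sum_list_case_prod_swap)
  also have "\<dots> = (\<Sum>(u, v)\<leftarrow>w. \<Phi> u v 1)"
    by (intro esC_coinvariant w) (unfold \<Phi>_def, intro clinear_intros lin)
  also have "\<dots> = (\<Sum>(u, v)\<leftarrow>w. \<Sum>(u0, h)\<leftarrow>\<delta> u. \<Sum>(v0, k)\<leftarrow>\<delta> v. \<Sum>(t1, t2)\<leftarrow>tau \<delta> h.
        \<Sum>(s1, s2)\<leftarrow>tau \<delta> k. \<Gamma> u0 t1 v0 s1 (t2 * s2) 1)"
  proof -
    have "(\<Sum>(r1, r2)\<leftarrow>tau \<delta> 1. \<Gamma> u0 t1 v0 s1 (x * r1) r2) = \<Gamma> u0 t1 v0 s1 x 1" for u0 t1 v0 s1 x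
      by (subst tau_one) (intro clinear_intros lin, simp)
    then show ?thesis
      by (simp add: \<Phi>_def)
  qed
  finally show ?thesis .
qed

(* omega is only used to evaluate that scalar. *)
lemma esC_tau_product_transfer:
  fixes \<omega> :: "'a \<Rightarrow> complex"
  assumes f: "bilin f" and g: "bilin g" and \<omega>: "clinear \<omega>" "\<omega> 1 = 1" and w: "w \<in> esC \<delta>"
  shows "(\<Sum>(u, v)\<leftarrow>w. \<Sum>(u0, h)\<leftarrow>\<delta> u. \<Sum>(v0, k)\<leftarrow>\<delta> v. \<Sum>(t1, t2)\<leftarrow>tau \<delta> h. \<Sum>(s1, s2)\<leftarrow>tau \<delta> k.
        g v0 (s1 * (t2 * s2)) * f u0 t1)
    = (\<Sum>(u, v)\<leftarrow>w. \<Sum>(u0, h)\<leftarrow>\<delta> u. \<Sum>(v0, k)\<leftarrow>\<delta> v. \<Sum>(t1, t2)\<leftarrow>tau \<delta> h. \<Sum>(s1, s2)\<leftarrow>tau \<delta> k.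
        g v0 s1 * f u0 (t1 * (t2 * s2)))"
proof -
  define \<Gamma>1 where "\<Gamma>1 u0 t1 v0 s1 a b = g v0 (s1 * b) * f u0 t1 * \<omega> a" for u0 t1 v0 s1 a b
  define \<Gamma>2 where "\<Gamma>2 u0 t1 v0 s1 a b = g v0 s1 * f u0 (t1 * b) * \<omega> a" for u0 t1 v0 s1 a b
  note lin = bilin_clinear_comp[OF f] bilin_clinear_comp[OF g] \<omega>(1)
  have "lin6 \<Gamma>1" "lin6 \<Gamma>2"
    unfolding \<Gamma>1_def \<Gamma>2_def by (intro clinear_intros lin)+
  note scalar = esC_tau_product_scalar[OF this(1) w] esC_tau_product_scalar[OF this(2) w]
  have "(\<Sum>(u, v)\<leftarrow>w. \<Sum>(u0, h)\<leftarrow>\<delta> u. \<Sum>(v0, k)\<leftarrow>\<delta> v. \<Sum>(t1, t2)\<leftarrow>tau \<delta> h. \<Sum>(s1, s2)\<leftarrow>tau \<delta> k.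
        g v0 (s1 * (t2 * s2)) * f u0 t1)
      = (\<Sum>(u, v)\<leftarrow>w. \<Sum>(u0, h)\<leftarrow>\<delta> u. \<Sum>(v0, k)\<leftarrow>\<delta> v. \<Sum>(t1, t2)\<leftarrow>tau \<delta> h. \<Sum>(s1, s2)\<leftarrow>tau \<delta> k.
        \<Gamma>1 u0 t1 v0 s1 1 (t2 * s2))"
    by (simp add: \<Gamma>1_def \<omega>(2))
  also have "\<dots> = (\<Sum>(u, v)\<leftarrow>w. \<Sum>(u0, h)\<leftarrow>\<delta> u. \<Sum>(v0, k)\<leftarrow>\<delta> v. \<Sum>(t1, t2)\<leftarrow>tau \<delta> h. \<Sum>(s1, s2)\<leftarrow>tau \<delta> k.
        \<Gamma>2 u0 t1 v0 s1 (t2 * s2) 1)"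
    by (simp add: scalar(1)) (simp add: \<Gamma>1_def \<Gamma>2_def)
  also have "\<dots> = (\<Sum>(u, v)\<leftarrow>w. \<Sum>(u0, h)\<leftarrow>\<delta> u. \<Sum>(v0, k)\<leftarrow>\<delta> v. \<Sum>(t1, t2)\<leftarrow>tau \<delta> h. \<Sum>(s1, s2)\<leftarrow>tau \<delta> k.
        g v0 s1 * f u0 (t1 * (t2 * s2)))"
    by (simp add: scalar(2)[symmetric]) (simp add: \<Gamma>2_def \<omega>(2))
  finally show ?thesis .
qed

lemma esC_coprod_antipode_Fphi:
  assumes \<beta>: "bilin \<beta>" "\<beta> 1 1 = 1" and f: "bilin f" and w: "w \<in> esC \<delta>"
  shows "(\<Sum>(u, v)\<leftarrow>w. \<Sum>(c2, c3)\<leftarrow>esC_coprod \<delta> [(u, v)]. lfun \<beta> (esC_antipode \<delta> [c3]) * f (fst c2) (snd c2))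
    = (\<Sum>(u, v)\<leftarrow>w. f u (Fphi \<delta> \<beta> v))"
proof -
  note lin = bilin_clinear_comp[OF \<beta>(1)] bilin_clinear_comp[OF f]
  have "(\<Sum>(u, v)\<leftarrow>w. \<Sum>(c2, c3)\<leftarrow>esC_coprod \<delta> [(u, v)]. lfun \<beta> (esC_antipode \<delta> [c3]) * f (fst c2) (snd c2))
      = (\<Sum>(u, v)\<leftarrow>w. \<Sum>(u0, h)\<leftarrow>\<delta> u. \<Sum>(v0, k)\<leftarrow>\<delta> v. \<Sum>(t1, t2)\<leftarrow>tau \<delta> h. \<Sum>(s1, s2)\<leftarrow>tau \<delta> k.
        \<beta> v0 s1 * f u0 (t1 * t2 * s2))"
    unfolding esC_coprod_antipode_sum mult.assoc
    by (rule esC_tau_product_transfer[OF f \<beta>(1) bilin_clinear(1)[OF \<beta>(1), of 1] \<beta>(2) w])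
  also have "\<dots> = (\<Sum>(u, v)\<leftarrow>w. \<Sum>(u0, h)\<leftarrow>\<delta> u. \<Sum>(v0, k)\<leftarrow>\<delta> v. \<epsilon> h * (\<Sum>(s1, s2)\<leftarrow>tau \<delta> k.
        \<beta> v0 s1 * f u0 s2))"
  proof -
    have "clinear (\<lambda>a. \<Sum>(s1, s2)\<leftarrow>tau \<delta> k. \<beta> v0 s1 * f u0 (a * s2))" for u0 v0 k
      by (intro clinear_intros lin)
    from tau_mult[OF this] show ?thesis
      by simp
  qed
  also have "\<dots> = (\<Sum>(u, v)\<leftarrow>w. \<Sum>(v0, k)\<leftarrow>\<delta> v. \<Sum>(s1, s2)\<leftarrow>tau \<delta> k. \<beta> v0 s1 * f u s2)"
  proof -
    have "clinear (\<lambda>u0. \<Sum>(v0, k)\<leftarrow>\<delta> v. \<Sum>(s1, s2)\<leftarrow>tau \<delta> k. \<beta> v0 s1 * f u0 s2)" for v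
      by (intro clinear_intros lin)
    from delta_counit_clinear[OF this] show ?thesis
      by (simp add: sum_list_case_prod_const_mult)
  qed
  also have "\<dots> = (\<Sum>(u, v)\<leftarrow>w. f u (Fphi \<delta> \<beta> v))"
    by (simp add: clinear_Fphi_eq[OF bilin_clinear(2)[OF f]])
  finally show ?thesis .
qed

lemma Ad_teq2_coinn:
  assumes \<beta>: "bilin \<beta>" "\<beta> 1 1 = 1" and c: "c \<in> esC \<delta>"
  shows "teq2 (Ad \<delta> \<beta> c) (coinn \<delta> \<beta> c)"
proof (rule teq2I)
  fix f :: "'a \<Rightarrow> 'a \<Rightarrow> complex"
  assume f: "bilin f"
  define E where "E d = (\<Sum>(c2, c3)\<leftarrow>esC_coprod \<delta> [d]. lfun \<beta> (esC_antipode \<delta> [c3]) * f (fst c2) (snd c2))"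
    for d
  have E_linear: "clinear (\<lambda>u. E (u, v))" for v
    unfolding E_def esC_coprod_antipode_sum
    by (intro clinear_intros bilin_clinear_comp[OF \<beta>(1)] bilin_clinear_comp[OF f])
  have "(\<Sum>(x, y)\<leftarrow>Ad \<delta> \<beta> c. f x y) = (\<Sum>(u, v)\<leftarrow>map (\<lambda>(a, b). (Fphi \<delta> \<beta> a, b)) c. f u (Fphi \<delta> \<beta> v))"
    by (simp add: Ad_def o_def split_def)
  also have "\<dots> = (\<Sum>(u, v)\<leftarrow>map (\<lambda>(a, b). (Fphi \<delta> \<beta> a, b)) c. E (u, v))"
    unfolding E_def by (rule esC_coprod_antipode_Fphi[OF \<beta> f esC_map_Fphi[OF \<beta>(1) c], symmetric])
  also have "\<dots> = (\<Sum>(x, y)\<leftarrow>c. E (Fphi \<delta> \<beta> x, y))"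
    by (simp add: o_def split_def)
  also have "\<dots> = (\<Sum>(c1, d)\<leftarrow>esC_coprod \<delta> c. lfun \<beta> [c1] * E d)"
    by (rule esC_coprod_lfun_left[symmetric]) (rule E_linear)
  also have "\<dots> = (\<Sum>(x, y)\<leftarrow>coinn \<delta> \<beta> c. f x y)"
    by (simp add: coinn_def E_def sum_list_concat_map o_def split_def sum_list_const_mult mult.assoc
        clinear_scaleC[OF bilin_clinear(1)[OF f]])
  finally show "(\<Sum>(x, y)\<leftarrow>Ad \<delta> \<beta> c. f x y) = (\<Sum>(x, y)\<leftarrow>coinn \<delta> \<beta> c. f x y)" .
qed

end

theorem lemma5p7:
  fixes \<Delta> :: "'h::complex_algebra_1 \<Rightarrow> ('h \<times> 'h) list"
    and \<epsilon> :: "'h \<Rightarrow> complex"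
    and S :: "'h \<Rightarrow> 'h"
    and \<delta> :: "'a::complex_algebra_1 \<Rightarrow> ('a \<times> 'h) list"
    and \<beta> :: "'a \<Rightarrow> 'a \<Rightarrow> complex"
  assumes "hopf_algebra \<Delta> \<epsilon> S"
    and "galois_object \<Delta> \<epsilon> \<delta>"
    and "esC_character \<delta> \<beta>"
    and "c \<in> esC \<delta>"
  shows "teq2 (Ad \<delta> \<beta> c) (coinn \<delta> \<beta> c)"
proof -
  interpret hopf_galois \<Delta> \<epsilon> S \<delta>
    using assms(1,2) by unfold_locales
  from assms(3) have "bilin \<beta>" and "\<beta> 1 1 = 1"
    by (simp_all add: esC_character_def lfun_def)
  then show ?thesis
    using assms(4) by (rule Ad_teq2_coinn)
qed

end
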